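(* Let $\mathbb{X}=(X_n)_{n\ge0}$ be uniformly dominated by $\nu$ at rate $\epsilon(\delta)$, and let $(\mathcal{F}_n)_n$ be its natural filtration. Let $(A_n)_n$ be an $(\mathcal{F}_n)$-predictable sequence of measurable sets (i.e. $A_n$ is determined by $\mathcal{F}_{n-1}$) with $\limsup_{n\to\infty}\nu(A_n)<\delta$ almost surely. Then \[\limsup_{N\to\infty}\frac1N\sum_{n=1}^N\mathbb{1}\{X_n\in A_n\}\le\epsilon(\delta)\quad\text{almost surely.}\]
   Context: $(\mathcal{X},\rho,\nu)$ is a metric measure space with $\rho$ separable and $\nu$ a finite Borel measure. $\mathbb{X}_{<n}=\{X_0,\dots,X_{n-1}\}$. $\mathbb{X}$ is uniformly dominated by $\nu$ if for every $\epsilon>0$ there is $\delta>0$ such that every measurable $A$ with $\nu(A)<\delta$ satisfies $\sup_n\Pr(X_n\in A\mid\mathbb{X}_{<n})<\epsilon$ a.s.; it is uniformly dominated at rate $\epsilon(\cdot)$ if in addition, for every $\delta>0$ and measurable $A$ with $\nu(A)<\delta$, $\sup_n\Pr(X_n\in A\mid\mathbb{X}_{<n})<\epsilon(\delta)$ a.s. *)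

theory Defs
  imports "HOL-Probability.Probability"
begin

text \<open>The paper's natural filtration
  is F_n = nat_past M X (Suc n), so "F_{n-1}-measurable" is "nat_past M X n-measurable".\<close>
definition nat_past :: "'b measure \<Rightarrow> (nat \<Rightarrow> 'b \<Rightarrow> 'a::topological_space) \<Rightarrow> nat \<Rightarrow> 'b measure" where
  "nat_past M X n = sigma (space M) {X i -` B \<inter> space M | i B. i < n \<and> B \<in> sets borel}"

definition cond_prob :: "'b measure \<Rightarrow> (nat \<Rightarrow> 'b \<Rightarrow> 'a::topological_space) \<Rightarrow> nat \<Rightarrow> 'a set \<Rightarrow> 'b \<Rightarrow> real" where
  "cond_prob M X n A = real_cond_exp M (nat_past M X n) (\<lambda>\<omega>. indicator A (X n \<omega>))"

definition unif_dom :: "'b measure \<Rightarrow> (nat \<Rightarrow> 'b \<Rightarrow> 'a::topological_space) \<Rightarrow> 'a measure \<Rightarrow> bool" where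
  "unif_dom M X \<nu> \<longleftrightarrow> (\<forall>e>0. \<exists>d>0. \<forall>A\<in>sets \<nu>. measure \<nu> A < d \<longrightarrow>
      (AE \<omega> in M. (\<Squnion>n. cond_prob M X n A \<omega>) < e))"

definition unif_dom_rate :: "'b measure \<Rightarrow> (nat \<Rightarrow> 'b \<Rightarrow> 'a::topological_space) \<Rightarrow> 'a measure \<Rightarrow> (real \<Rightarrow> real) \<Rightarrow> bool" where
  "unif_dom_rate M X \<nu> \<epsilon> \<longleftrightarrow> unif_dom M X \<nu> \<and> (\<forall>d>0. \<forall>A\<in>sets \<nu>. measure \<nu> A < d \<longrightarrow>
      (AE \<omega> in M. (\<Squnion>n. cond_prob M X n A \<omega>) < \<epsilon> d))"

end

(*
  Fix n and let F be the past of X before time n.  If A is F-predictable and \<nu>(A(\<omega>)) < \<delta> for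
  every \<omega>, then P(X n \<in> A | F) \<le> \<epsilon> \<delta> almost surely.  For a deterministic Borel set this is
  uniform domination; for a predictable set with finitely many values it follows by splitting along
  the values; in general the graph of A is approximated by such a set simultaneously in the joint law
  of (\<omega>, X n) and in P \<Otimes> \<nu>, and a margin in \<nu>-measure absorbs the error through Markov's
  inequality.

  The indicators minus their (truncated) conditional probabilities are then bounded martingale
  differences.  Their partial sums have second moment O(N), so by Chebyshev's inequality and
  Borel-Cantelli they are o(N) along the squares N = k\<^sup>2 and hence along all N.  Finally, replacing
  A n by the empty set wherever \<nu>(A n) \<ge> \<delta> changes only finitely many terms almost surely.
*)

theory Submission
  imports Defs "HOL-Library.Discrete_Functions"
begin

section \<open>Approximation in measure by an algebra of sets\<close>

lemma (in finite_measure) measure_le_add_measure_sym_diff: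
  assumes "A \<in> sets M" "B \<in> sets M"
  shows "measure M B \<le> measure M A + measure M (sym_diff A B)"
proof -
  have "measure M B \<le> measure M (A \<union> sym_diff A B)"
    using assms by (intro finite_measure_mono) auto
  also have "\<dots> \<le> measure M A + measure M (sym_diff A B)"
    using assms by (intro measure_Un_le) auto
  finally show ?thesis .
qed

lemma (in finite_measure) measure_sym_diff_UN_le:
  fixes A R :: "nat \<Rightarrow> 'a set"
  assumes A: "range A \<subseteq> sets M" and R: "\<And>i. R i \<in> sets M"
    and close: "\<And>i. measure M (sym_diff (A i) (R i)) \<le> e"
  shows "measure M (sym_diff (\<Union>i. A i) (\<Union>i<m. R i))
    \<le> measure M (\<Union>i. A i) - measure M (\<Union>i<m. A i) + real m * e"
proof -
  have UA: "(\<Union>i. A i) \<in> sets M" "(\<Union>i<m. A i) \<in> sets M"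
    using A by auto
  have D: "sym_diff (A i) (R i) \<in> sets M" for i
    using A R by auto
  have "measure M (sym_diff (\<Union>i. A i) (\<Union>i<m. R i))
      \<le> measure M (((\<Union>i. A i) - (\<Union>i<m. A i)) \<union> (\<Union>i<m. sym_diff (A i) (R i)))"
    using UA D by (intro finite_measure_mono) auto
  also have "\<dots> \<le> measure M ((\<Union>i. A i) - (\<Union>i<m. A i)) + measure M (\<Union>i<m. sym_diff (A i) (R i))"
    using UA D by (intro measure_Un_le) auto
  also have "\<dots> = measure M (\<Union>i. A i) - measure M (\<Union>i<m. A i) + measure M (\<Union>i<m. sym_diff (A i) (R i))"
    using UA by (subst finite_measure_Diff) auto
  also have "measure M (\<Union>i<m. sym_diff (A i) (R i)) \<le> (\<Sum>i<m. measure M (sym_diff (A i) (R i)))"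
    using D by (intro measure_UNION_le) auto
  also have "\<dots> \<le> real m * e"
    using sum_mono[of "{..<m}", OF close] by simp
  finally show ?thesis by simp
qed

lemma (in finite_measure) eventually_measure_UN_lessThan:
  fixes A :: "nat \<Rightarrow> 'a set"
  assumes A: "range A \<subseteq> sets M" and "0 < e"
  shows "eventually (\<lambda>m. measure M (\<Union>i. A i) - measure M (\<Union>i<m. A i) < e) sequentially"
proof -
  have "(\<Union>m. \<Union>i<m. A i) = (\<Union>i. A i)" by blast
  moreover have "incseq (\<lambda>m. \<Union>i<m. A i)" by (intro monoI UN_mono) auto
  moreover have "range (\<lambda>m. \<Union>i<m. A i) \<subseteq> sets M"
    using A by (intro image_subsetI sets.finite_UN) auto
  ultimately have "(\<lambda>m. measure M (\<Union>i<m. A i)) \<longlonglongrightarrow> measure M (\<Union>i. A i)"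
    by (metis finite_Lim_measure_incseq)
  then have "eventually (\<lambda>m. measure M (\<Union>i. A i) - e < measure M (\<Union>i<m. A i)) sequentially"
    using \<open>0 < e\<close> by (intro order_tendstoD(1)) auto
  then show ?thesis by (elim eventually_mono) linarith
qed

lemma sigma_sets_approx_by_algebra:
  assumes G: "algebra \<Omega> G" and N1: "finite_measure N1" and N2: "finite_measure N2"
    and sets_N1: "sets N1 = sigma_sets \<Omega> G" and sets_N2: "sets N2 = sigma_sets \<Omega> G"
    and S: "S \<in> sigma_sets \<Omega> G" and "\<tau> > 0"
  shows "\<exists>R\<in>G. measure N1 (sym_diff S R) < \<tau> \<and> measure N2 (sym_diff S R) < \<tau>"
proof -
  interpret G: algebra \<Omega> G by fact
  show ?thesis
    using S \<open>\<tau> > 0\<close>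
  proof (induction arbitrary: \<tau> rule: sigma_sets.induct)
    case (Basic a)
    then show ?case by (intro bexI[of _ a]) auto
  next
    case Empty
    then show ?case by (intro bexI[of _ "{}"]) auto
  next
    case (Compl a)
    then obtain R where R: "R \<in> G" "measure N1 (sym_diff a R) < \<tau>" "measure N2 (sym_diff a R) < \<tau>"
      by blast
    have "a \<subseteq> \<Omega>" "R \<subseteq> \<Omega>"
      using sigma_sets_into_sp[OF G.space_closed Compl.hyps] G.sets_into_space[OF R(1)] by auto
    then have "sym_diff (\<Omega> - a) (\<Omega> - R) = sym_diff a R" by blast
    then show ?case using R by (intro bexI[of _ "\<Omega> - R"]) auto
  next
    case (Union A)
    interpret N1: finite_measure N1 by fact
    interpret N2: finite_measure N2 by fact
    have A1: "range A \<subseteq> sets N1" and A2: "range A \<subseteq> sets N2" using Union.hyps sets_N1 sets_N2 by auto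
    have "0 < \<tau>/2" using Union.prems by simp
    then obtain m where m: "measure N1 (\<Union>i. A i) - measure N1 (\<Union>i<m. A i) < \<tau>/2"
        "measure N2 (\<Union>i. A i) - measure N2 (\<Union>i<m. A i) < \<tau>/2"
      using eventually_conj[OF N1.eventually_measure_UN_lessThan[OF A1] N2.eventually_measure_UN_lessThan[OF A2]]
      unfolding eventually_sequentially by blast
    define e where "e = \<tau> / (2 * (real m + 1))"
    have "0 < e" and "real m * e < \<tau>/2" using Union.prems by (simp_all add: e_def field_simps)
    then obtain R where R: "\<And>i. R i \<in> G" "\<And>i. measure N1 (sym_diff (A i) (R i)) < e"
        "\<And>i. measure N2 (sym_diff (A i) (R i)) < e"
      using Union.IH by metis
    have RN: "R i \<in> sets N1" "R i \<in> sets N2" for i using R(1) sets_N1 sets_N2 by auto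
    have "measure N1 (sym_diff (\<Union>i. A i) (\<Union>i<m. R i))
        \<le> measure N1 (\<Union>i. A i) - measure N1 (\<Union>i<m. A i) + real m * e"
      using RN(1) R(2) by (intro N1.measure_sym_diff_UN_le[OF A1] less_imp_le)
    moreover have "measure N2 (sym_diff (\<Union>i. A i) (\<Union>i<m. R i))
        \<le> measure N2 (\<Union>i. A i) - measure N2 (\<Union>i<m. A i) + real m * e"
      using RN(2) R(3) by (intro N2.measure_sym_diff_UN_le[OF A2] less_imp_le)
    ultimately show ?case
      using m \<open>real m * e < \<tau>/2\<close> G.finite_UN[of "{..<m}" R] R(1)
      by (intro bexI[of _ "\<Union>i<m. R i"]) auto
  qed
qed

section \<open>Random sets with finitely many values\<close>

definition set_graph :: "'b measure \<Rightarrow> ('b \<Rightarrow> 'a set) \<Rightarrow> ('b \<times> 'a) set" where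
  "set_graph F S = {(\<omega>, x). \<omega> \<in> space F \<and> x \<in> S \<omega>}"

definition simple_random_set :: "'b measure \<Rightarrow> ('b \<Rightarrow> 'a::topological_space set) \<Rightarrow> bool" where
  "simple_random_set F S \<longleftrightarrow> finite (S ` space F) \<and> (\<forall>\<omega>\<in>space F. S \<omega> \<in> sets borel) \<and>
    (\<forall>D. {\<omega>\<in>space F. S \<omega> = D} \<in> sets F)"

lemma vimage_Pair_set_graph: "\<omega> \<in> space F \<Longrightarrow> Pair \<omega> -` set_graph F S = S \<omega>"
  by (auto simp: set_graph_def)

lemma simple_random_set_combine:
  fixes S T :: "'b \<Rightarrow> 'a::topological_space set"
  assumes S: "simple_random_set F S" and T: "simple_random_set F T"
    and g: "\<And>A B. A \<in> sets borel \<Longrightarrow> B \<in> sets borel \<Longrightarrow> g A B \<in> sets (borel :: 'a measure)"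
  shows "simple_random_set F (\<lambda>\<omega>. g (S \<omega>) (T \<omega>))"
proof -
  let ?V = "S ` space F \<times> T ` space F"
  have "(\<lambda>\<omega>. g (S \<omega>) (T \<omega>)) ` space F \<subseteq> (\<lambda>(A, B). g A B) ` ?V" by auto
  moreover have "finite ?V" using S T by (simp add: simple_random_set_def)
  ultimately have "finite ((\<lambda>\<omega>. g (S \<omega>) (T \<omega>)) ` space F)" by (metis finite_subset finite_imageI)
  moreover have "{\<omega>\<in>space F. g (S \<omega>) (T \<omega>) = D} \<in> sets F" for D
  proof -
    have "{\<omega>\<in>space F. g (S \<omega>) (T \<omega>) = D} =
        (\<Union>(A, B)\<in>{(A, B)\<in>?V. g A B = D}. {\<omega>\<in>space F. S \<omega> = A} \<inter> {\<omega>\<in>space F. T \<omega> = B})"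
      by auto
    also have "\<dots> \<in> sets F"
      using finite_subset[OF _ \<open>finite ?V\<close>, of "{(A, B)\<in>?V. g A B = D}"] S T
      by (intro sets.finite_UN) (auto simp: simple_random_set_def)
    finally show ?thesis .
  qed
  moreover have "\<forall>\<omega>\<in>space F. g (S \<omega>) (T \<omega>) \<in> sets borel"
    using S T by (simp add: simple_random_set_def g)
  ultimately show ?thesis by (simp add: simple_random_set_def)
qed

lemma simple_random_set_rectangle:
  assumes "a \<in> sets F" and "b \<in> sets (borel :: 'a::topological_space measure)"
  shows "simple_random_set F (\<lambda>\<omega>. if \<omega> \<in> a then b else {})"
proof -
  have "finite ((\<lambda>\<omega>. if \<omega> \<in> a then b else {}) ` space F)"
    by (rule finite_subset[of _ "{b, {}}"]) auto
  moreover have "{\<omega>\<in>space F. (if \<omega> \<in> a then b else {}) = D} =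
      (if b = D then a else {}) \<union> (if {} = D then space F - a else {})" for D
    using sets.sets_into_space[OF assms(1)] by auto
  ultimately show ?thesis using assms by (auto simp: simple_random_set_def)
qed

lemma set_graph_in_sets_pair_measure:
  assumes "simple_random_set F S"
  shows "set_graph F S \<in> sets (F \<Otimes>\<^sub>M (borel :: 'a::topological_space measure))"
proof -
  have "set_graph F S = (\<Union>D\<in>S ` space F. {\<omega>\<in>space F. S \<omega> = D} \<times> D)"
    unfolding set_graph_def by auto
  also have "\<dots> \<in> sets (F \<Otimes>\<^sub>M borel)"
    using assms unfolding simple_random_set_def by (intro sets.finite_UN pair_measureI) auto
  finally show ?thesis .
qed

lemma algebra_simple_random_set_graphs:
  "algebra (space F \<times> UNIV) (set_graph F ` {S :: 'b \<Rightarrow> 'a::topological_space set. simple_random_set F S})"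
  unfolding algebra_iff_Un
proof (intro conjI ballI)
  show "set_graph F ` {S. simple_random_set F S} \<subseteq> Pow (space F \<times> (UNIV :: 'a set))"
    by (auto simp: set_graph_def)
  have "{} = set_graph F (\<lambda>\<omega>. if \<omega> \<in> {} then {} else ({} :: 'a set))" by (simp add: set_graph_def)
  then show "{} \<in> set_graph F ` {S :: 'b \<Rightarrow> 'a set. simple_random_set F S}"
    using simple_random_set_rectangle[of "{}" F "{}"] by blast
next
  fix R :: "('b \<times> 'a) set" assume "R \<in> set_graph F ` {S. simple_random_set F S}"
  then obtain S :: "'b \<Rightarrow> 'a set" where "R = set_graph F S" "simple_random_set F S" by blast
  moreover have "space F \<times> UNIV - set_graph F S = set_graph F (\<lambda>\<omega>. UNIV - S \<omega>)"
    by (auto simp: set_graph_def)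
  ultimately show "space F \<times> UNIV - R \<in> set_graph F ` {S. simple_random_set F S}"
    using simple_random_set_combine[of F S S "\<lambda>A B. UNIV - A"] by auto
next
  fix R R' :: "('b \<times> 'a) set" assume "R \<in> set_graph F ` {S. simple_random_set F S}" "R' \<in> set_graph F ` {S. simple_random_set F S}"
  then obtain S S' :: "'b \<Rightarrow> 'a set" where "R = set_graph F S" "simple_random_set F S" "R' = set_graph F S'" "simple_random_set F S'"
    by blast
  moreover have "set_graph F S \<union> set_graph F S' = set_graph F (\<lambda>\<omega>. S \<omega> \<union> S' \<omega>)"
    by (auto simp: set_graph_def)
  ultimately show "R \<union> R' \<in> set_graph F ` {S. simple_random_set F S}"
    using simple_random_set_combine[of F S S' "(\<union>)"] by auto
qed

lemma sets_pair_measure_eq_sigma_simple_random_set_graphs: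
  "sets (F \<Otimes>\<^sub>M (borel :: 'a::topological_space measure)) =
    sigma_sets (space F \<times> UNIV) (set_graph F ` {S :: 'b \<Rightarrow> 'a set. simple_random_set F S})"
  unfolding sets_pair_measure space_borel
proof (intro sigma_sets_eqI)
  fix R assume "R \<in> {a \<times> b |a b. a \<in> sets F \<and> b \<in> sets (borel :: 'a measure)}"
  then obtain a b where ab: "R = a \<times> b" "a \<in> sets F" "b \<in> sets (borel :: 'a measure)" by blast
  then have "R = set_graph F (\<lambda>\<omega>. if \<omega> \<in> a then b else {})"
    using sets.sets_into_space[OF ab(2)] by (auto simp: set_graph_def split: if_splits)
  then have "R \<in> set_graph F ` {S. simple_random_set F S}"
    using simple_random_set_rectangle[OF ab(2,3)] by blast
  then show "R \<in> sigma_sets (space F \<times> UNIV) (set_graph F ` {S. simple_random_set F S})"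
    by (rule sigma_sets.Basic)
next
  fix R assume "R \<in> set_graph F ` {S :: 'b \<Rightarrow> 'a set. simple_random_set F S}"
  then obtain S :: "'b \<Rightarrow> 'a set" where "R = set_graph F S" "simple_random_set F S" by blast
  then have "R \<in> sets (F \<Otimes>\<^sub>M borel)" using set_graph_in_sets_pair_measure by blast
  then show "R \<in> sigma_sets (space F \<times> UNIV) {a \<times> b |a b. a \<in> sets F \<and> b \<in> sets (borel :: 'a measure)}"
    unfolding sets_pair_measure space_borel .
qed

lemma approx_by_simple_random_set:
  fixes S :: "'b \<Rightarrow> 'a::topological_space set"
  assumes "finite_measure N1" "finite_measure N2"
    and "sets N1 = sets (F \<Otimes>\<^sub>M borel)" "sets N2 = sets (F \<Otimes>\<^sub>M borel)"
    and "set_graph F S \<in> sets (F \<Otimes>\<^sub>M borel)" and "\<tau> > 0"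
  obtains S' where "simple_random_set F S'"
    "measure N1 (set_graph F (\<lambda>\<omega>. sym_diff (S \<omega>) (S' \<omega>))) < \<tau>"
    "measure N2 (set_graph F (\<lambda>\<omega>. sym_diff (S \<omega>) (S' \<omega>))) < \<tau>"
proof -
  let ?G = "set_graph F ` {S :: 'b \<Rightarrow> 'a set. simple_random_set F S}"
  have sets_N: "sets N1 = sigma_sets (space F \<times> UNIV) ?G" "sets N2 = sigma_sets (space F \<times> UNIV) ?G"
    and graph: "set_graph F S \<in> sigma_sets (space F \<times> UNIV) ?G"
    using assms(3-5) unfolding sets_pair_measure_eq_sigma_simple_random_set_graphs by simp_all
  obtain R where "R \<in> ?G" and R: "measure N1 (sym_diff (set_graph F S) R) < \<tau>"
      "measure N2 (sym_diff (set_graph F S) R) < \<tau>"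
    using sigma_sets_approx_by_algebra[OF algebra_simple_random_set_graphs assms(1,2) sets_N graph assms(6)]
    by blast
  then obtain S' where "simple_random_set F S'" "R = set_graph F S'" by blast
  moreover have "sym_diff (set_graph F S) (set_graph F S') = set_graph F (\<lambda>\<omega>. sym_diff (S \<omega>) (S' \<omega>))"
    by (auto simp: set_graph_def)
  ultimately show ?thesis using that R by simp
qed

section \<open>Measurability of random sets and conditional expectations\<close>

lemma measurable_pair_ident_subalgebra:
  assumes "subalgebra G F" and "Y \<in> measurable G N"
  shows "(\<lambda>\<omega>. (\<omega>, Y \<omega>)) \<in> measurable G (F \<Otimes>\<^sub>M N)"
proof -
  have "(\<lambda>\<omega>. \<omega>) \<in> measurable G F"
    using assms(1) by (auto simp: subalgebra_def measurable_def intro: sets.Int_space_eq2[symmetric])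
  then show ?thesis using assms(2) by measurable
qed

lemma measurable_indicator_set_graph:
  assumes S: "set_graph F S \<in> sets (F \<Otimes>\<^sub>M borel)" and "subalgebra G F" "Y \<in> borel_measurable G"
  shows "(\<lambda>\<omega>. indicator (S \<omega>) (Y \<omega>) :: real) \<in> borel_measurable G"
proof (rule measurable_cong[THEN iffD1])
  show "indicator (set_graph F S) (\<omega>, Y \<omega>) = (indicator (S \<omega>) (Y \<omega>) :: real)" if "\<omega> \<in> space G" for \<omega>
    using that \<open>subalgebra G F\<close> by (auto simp: set_graph_def subalgebra_def indicator_def)
  show "(\<lambda>\<omega>. indicator (set_graph F S) (\<omega>, Y \<omega>) :: real) \<in> borel_measurable G"
    using measurable_pair_ident_subalgebra[OF assms(2,3)] S by measurable
qed

lemma measurable_emeasure_set_graph: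
  assumes "sigma_finite_measure \<nu>" "set_graph F S \<in> sets (F \<Otimes>\<^sub>M \<nu>)"
  shows "(\<lambda>\<omega>. emeasure \<nu> (S \<omega>)) \<in> borel_measurable F"
proof (rule measurable_cong[THEN iffD1])
  show "emeasure \<nu> (Pair \<omega> -` set_graph F S) = emeasure \<nu> (S \<omega>)" if "\<omega> \<in> space F" for \<omega>
    using that by (auto simp: set_graph_def intro!: arg_cong[where f="emeasure \<nu>"])
  show "(\<lambda>\<omega>. emeasure \<nu> (Pair \<omega> -` set_graph F S)) \<in> borel_measurable F"
    using assms by (rule sigma_finite_measure.measurable_emeasure_Pair)
qed

lemma measurable_measure_set_graph:
  assumes "sigma_finite_measure \<nu>" "set_graph F S \<in> sets (F \<Otimes>\<^sub>M \<nu>)"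
  shows "(\<lambda>\<omega>. measure \<nu> (S \<omega>)) \<in> borel_measurable F"
  using measurable_emeasure_set_graph[OF assms] unfolding measure_def by measurable

context finite_measure_subalgebra
begin

lemma sets_subalgebra_subset: "A \<in> sets F \<Longrightarrow> A \<in> sets M"
  using subalg by (auto simp: subalgebra_def)

lemma set_integral_le_of_AE_cond_exp_le:
  assumes f: "integrable M f" and H: "H \<in> sets F"
    and le: "AE \<omega> in M. real_cond_exp M F f \<omega> \<le> c"
  shows "(\<integral>\<omega>. indicator H \<omega> * f \<omega> \<partial>M) \<le> c * measure M H"
proof -
  have HM: "H \<in> sets M" using H by (rule sets_subalgebra_subset)
  have int: "integrable M (\<lambda>\<omega>. indicator H \<omega> * f \<omega>)"
    using integrable_real_mult_indicator[OF HM f] by (simp add: mult.commute)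
  have int_c: "integrable M (\<lambda>\<omega>. indicator H \<omega> * c)"
    using HM by (intro integrable_mult_left integrable_real_indicator) (auto simp: emeasure_eq_measure)
  have "(\<integral>\<omega>. indicator H \<omega> * f \<omega> \<partial>M) = (\<integral>\<omega>. indicator H \<omega> * real_cond_exp M F f \<omega> \<partial>M)"
    using real_cond_exp_intg(2)[OF int] H f by simp
  also have "\<dots> \<le> (\<integral>\<omega>. indicator H \<omega> * c \<partial>M)"
    using real_cond_exp_intg(1)[OF int] int_c H f le
    by (intro integral_mono_AE) (auto simp: indicator_def elim: eventually_mono)
  also have "\<dots> = c * measure M H"
    using HM by (simp add: mult.commute)
  finally show ?thesis .
qed

lemma AE_cond_exp_le_of_set_integral_le:
  assumes f: "integrable M f" and G: "G \<in> sets F"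
    and le: "\<And>H. H \<in> sets F \<Longrightarrow> H \<subseteq> G \<Longrightarrow> (\<integral>\<omega>. indicator H \<omega> * f \<omega> \<partial>M) \<le> c * measure M H"
  shows "AE \<omega> in M. \<omega> \<in> G \<longrightarrow> real_cond_exp M F f \<omega> \<le> c"
proof -
  let ?p = "real_cond_exp M F f"
  define H where "H = {\<omega>\<in>G. c < ?p \<omega>}"
  have H: "H \<in> sets F"
    using G sets.sets_into_space[OF G] unfolding H_def by measurable
  have HM: "H \<in> sets M" using H by (rule sets_subalgebra_subset)
  have int: "integrable M (\<lambda>\<omega>. indicator H \<omega> * f \<omega>)"
    using integrable_real_mult_indicator[OF HM f] by (simp add: mult.commute)
  have int_p: "integrable M (\<lambda>\<omega>. indicator H \<omega> * ?p \<omega>)"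
    using real_cond_exp_intg(1)[OF int] H f by simp
  have int_c: "integrable M (\<lambda>\<omega>. indicator H \<omega> * c)"
    using HM by (intro integrable_mult_left integrable_real_indicator) (auto simp: emeasure_eq_measure)
  let ?g = "\<lambda>\<omega>. indicator H \<omega> * ?p \<omega> - indicator H \<omega> * c"
  have int_g: "integrable M ?g" using int_p int_c by simp
  have "(\<integral>\<omega>. ?g \<omega> \<partial>M) = (\<integral>\<omega>. indicator H \<omega> * ?p \<omega> \<partial>M) - (\<integral>\<omega>. indicator H \<omega> * c \<partial>M)"
    using int_p int_c by (rule Bochner_Integration.integral_diff)
  also have "\<dots> = (\<integral>\<omega>. indicator H \<omega> * f \<omega> \<partial>M) - c * measure M H"
    using real_cond_exp_intg(2)[OF int] H f HM by (simp add: mult.commute)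
  also have "\<dots> \<le> 0" using le[OF H] by (simp add: H_def)
  finally have "(\<integral>\<omega>. ?g \<omega> \<partial>M) = 0"
    by (intro antisym integral_nonneg_AE) (auto simp: H_def indicator_def)
  then have "AE \<omega> in M. ?g \<omega> = 0"
    using integral_nonneg_eq_0_iff_AE[OF int_g] by (auto simp: H_def indicator_def)
  then show ?thesis by eventually_elim (auto simp: H_def indicator_def)
qed

lemma measure_section_ge_le:
  assumes nu: "finite_measure \<nu>" and S: "set_graph M S \<in> sets (F \<Otimes>\<^sub>M \<nu>)" and "\<gamma> > 0"
  shows "\<gamma> * measure M {\<omega>\<in>space M. \<gamma> \<le> measure \<nu> (S \<omega>)}
    \<le> measure (restr_to_subalg M F \<Otimes>\<^sub>M \<nu>) (set_graph M S)"
proof -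
  interpret nu: finite_measure \<nu> by fact
  let ?T = "{\<omega>\<in>space M. \<gamma> \<le> measure \<nu> (S \<omega>)}"
  have space_F: "space F = space M" using subalg by (simp add: subalgebra_def)
  then have graph_F: "set_graph F S \<in> sets (F \<Otimes>\<^sub>M \<nu>)" using S by (simp add: set_graph_def)
  note [measurable] = measurable_emeasure_set_graph[OF nu.sigma_finite_measure_axioms graph_F]
    measurable_measure_set_graph[OF nu.sigma_finite_measure_axioms graph_F]
  have "?T \<in> sets F" unfolding space_F[symmetric] by measurable
  then have T: "?T \<in> sets M" by (rule sets_subalgebra_subset)
  have fin: "finite_measure (restr_to_subalg M F \<Otimes>\<^sub>M \<nu>)"
    using finite_measure_restr_to_subalg[OF subalg finite_measure_axioms] nu
    by (rule finite_measure_pair_measure[rotated])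
  have "ennreal \<gamma> * emeasure M ?T = (\<integral>\<^sup>+\<omega>. ennreal \<gamma> * indicator ?T \<omega> \<partial>M)"
    using T by (simp add: nn_integral_cmult_indicator)
  also have "\<dots> \<le> (\<integral>\<^sup>+\<omega>. emeasure \<nu> (S \<omega>) \<partial>M)"
    by (intro nn_integral_mono) (auto simp: indicator_def nu.emeasure_eq_measure)
  also have "\<dots> = (\<integral>\<^sup>+\<omega>. emeasure \<nu> (S \<omega>) \<partial>restr_to_subalg M F)"
    by (rule nn_integral_subalgebra2[OF subalg, symmetric]) measurable
  also have "\<dots> = (\<integral>\<^sup>+\<omega>. emeasure \<nu> (Pair \<omega> -` set_graph M S) \<partial>restr_to_subalg M F)"
    by (intro nn_integral_cong arg_cong[where f="emeasure \<nu>"]) (auto simp: space_restr_to_subalg set_graph_def)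
  also have "\<dots> = emeasure (restr_to_subalg M F \<Otimes>\<^sub>M \<nu>) (set_graph M S)"
    using S sets_restr_to_subalg[OF subalg] by (simp add: nu.emeasure_pair_measure_alt)
  finally show ?thesis
    using \<open>\<gamma> > 0\<close> by (simp add: emeasure_eq_measure finite_measure.emeasure_eq_measure[OF fin]
      ennreal_mult''[symmetric])
qed

end

section \<open>Conditional probability of hitting a predictable set\<close>

(* At time n of the main theorem, F is the past of X and (c, d) = (\<epsilon> \<delta>, \<delta>). *)
locale cond_dominated = prob_space M + finite_measure_subalgebra M F + nu: finite_measure \<nu>
  for M F :: "'b measure" and \<nu> :: "'a::topological_space measure" +
  fixes X :: "'b \<Rightarrow> 'a" and c d :: real
  assumes X_measurable [measurable]: "X \<in> borel_measurable M"
    and sets_nu: "sets \<nu> = sets borel"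
    and bound_nonneg: "0 \<le> c"
    and cond_exp_indicator_le: "\<And>B. B \<in> sets borel \<Longrightarrow> measure \<nu> B < d \<Longrightarrow>
      AE \<omega> in M. real_cond_exp M F (\<lambda>\<omega>. indicator B (X \<omega>)) \<omega> \<le> c"
begin

lemma space_subalgebra: "space F = space M"
  using subalg by (simp add: subalgebra_def)

lemma set_graph_subalgebra: "set_graph F S = set_graph M S"
  by (simp add: set_graph_def space_subalgebra)

lemma measurable_pair_X: "(\<lambda>\<omega>. (\<omega>, X \<omega>)) \<in> measurable M (F \<Otimes>\<^sub>M borel)"
  using subalg by (rule measurable_pair_ident_subalgebra) measurable

lemma measurable_indicator_X_in:
  assumes "set_graph M S \<in> sets (F \<Otimes>\<^sub>M borel)"
  shows "(\<lambda>\<omega>. indicator (S \<omega>) (X \<omega>) :: real) \<in> borel_measurable M"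
  using assms subalg X_measurable by (intro measurable_indicator_set_graph) (simp_all add: set_graph_subalgebra)

lemma sets_X_in:
  assumes "set_graph M S \<in> sets (F \<Otimes>\<^sub>M borel)"
  shows "{\<omega>\<in>space M. X \<omega> \<in> S \<omega>} \<in> sets M"
proof -
  have "{\<omega>\<in>space M. X \<omega> \<in> S \<omega>} = (\<lambda>\<omega>. (\<omega>, X \<omega>)) -` set_graph M S \<inter> space M"
    by (auto simp: set_graph_def)
  then show ?thesis using measurable_sets[OF measurable_pair_X assms] by simp
qed

lemma integral_indicator_X_in:
  assumes "set_graph M S \<in> sets (F \<Otimes>\<^sub>M borel)" and "H \<in> sets M"
  shows "(\<integral>\<omega>. indicator H \<omega> * indicator (S \<omega>) (X \<omega>) \<partial>M) = measure M {\<omega>\<in>H. X \<omega> \<in> S \<omega>}"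
proof -
  have "(\<lambda>\<omega>. indicator H \<omega> * indicator (S \<omega>) (X \<omega>) :: real) = indicator {\<omega>\<in>H. X \<omega> \<in> S \<omega>}"
    by (auto simp: indicator_def)
  moreover have "{\<omega>\<in>H. X \<omega> \<in> S \<omega>} \<inter> space M = {\<omega>\<in>H. X \<omega> \<in> S \<omega>}"
    using sets.sets_into_space[OF assms(2)] by auto
  ultimately show ?thesis by simp
qed

lemma integrable_indicator_X_in:
  assumes "set_graph M S \<in> sets (F \<Otimes>\<^sub>M borel)"
  shows "integrable M (\<lambda>\<omega>. indicator (S \<omega>) (X \<omega>) :: real)"
  using measurable_indicator_X_in[OF assms] by (intro integrable_const_bound[where B=1]) auto

lemma measure_X_in_Borel_le:
  assumes H: "H \<in> sets F" and B: "B \<in> sets borel" "measure \<nu> B < d"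
  shows "measure M {\<omega>\<in>H. X \<omega> \<in> B} \<le> c * measure M H"
proof -
  have graph: "set_graph M (\<lambda>_. B) \<in> sets (F \<Otimes>\<^sub>M borel)"
    using B by (simp add: set_graph_def space_subalgebra[symmetric] pair_measureI[OF sets.top])
  then show ?thesis
    using set_integral_le_of_AE_cond_exp_le[OF integrable_indicator_X_in H cond_exp_indicator_le[OF B]]
      integral_indicator_X_in[OF graph sets_subalgebra_subset[OF H]]
    by simp
qed

lemma measure_X_in_small_simple_random_set_le:
  assumes H: "H \<in> sets F" and S: "simple_random_set F S"
    and small: "\<And>\<omega>. \<omega> \<in> H \<Longrightarrow> measure \<nu> (S \<omega>) < d"
  shows "measure M {\<omega>\<in>H. X \<omega> \<in> S \<omega>} \<le> c * measure M H"
proof -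
  define V where "V = S ` H"
  define L where "L D = {\<omega>\<in>H. S \<omega> = D}" for D
  have H_space: "H \<subseteq> space M"
    using sets.sets_into_space[OF H] by (simp add: space_subalgebra)
  have "finite V" and borel: "\<And>D. D \<in> V \<Longrightarrow> D \<in> sets borel"
    using S H_space finite_subset[OF image_mono[OF H_space]]
    by (auto simp: V_def simple_random_set_def space_subalgebra)
  have L: "L D \<in> sets F" for D
  proof -
    have "L D = H \<inter> {\<omega>\<in>space F. S \<omega> = D}" using H_space by (auto simp: L_def space_subalgebra)
    then show ?thesis using H S by (auto simp: simple_random_set_def)
  qed
  have additive: "measure M (\<Union>D\<in>V. E D) = (\<Sum>D\<in>V. measure M (E D))"
    if "\<And>D. E D \<subseteq> L D" "\<And>D. D \<in> V \<Longrightarrow> E D \<in> sets M" for E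
  proof (intro finite_measure_finite_Union)
    show "disjoint_family_on E V"
      using that(1) unfolding disjoint_family_on_def L_def by blast
  qed (use that \<open>finite V\<close> in auto)
  have hit: "{\<omega>\<in>L D. X \<omega> \<in> D} \<in> sets M" if "D \<in> V" for D
  proof -
    have "{\<omega>\<in>L D. X \<omega> \<in> D} = L D \<inter> (X -` D \<inter> space M)" using H_space by (auto simp: L_def)
    then show ?thesis
      using sets_subalgebra_subset[OF L] measurable_sets[OF X_measurable borel[OF that]] by auto
  qed
  have "measure M {\<omega>\<in>H. X \<omega> \<in> S \<omega>} = measure M (\<Union>D\<in>V. {\<omega>\<in>L D. X \<omega> \<in> D})"
    by (rule arg_cong[where f="measure M"]) (auto simp: V_def L_def)
  also have "\<dots> = (\<Sum>D\<in>V. measure M {\<omega>\<in>L D. X \<omega> \<in> D})"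
    using hit by (intro additive) auto
  also have "\<dots> \<le> (\<Sum>D\<in>V. c * measure M (L D))"
    using small by (intro sum_mono measure_X_in_Borel_le[OF L borel]) (auto simp: V_def)
  also have "\<dots> = c * measure M (\<Union>D\<in>V. L D)"
    using sets_subalgebra_subset[OF L] by (subst additive) (auto simp: sum_distrib_left)
  also have "(\<Union>D\<in>V. L D) = H" by (auto simp: V_def L_def)
  finally show ?thesis .
qed

lemma measure_X_in_simple_random_set_le:
  assumes H: "H \<in> sets F" and S: "simple_random_set F S"
  shows "measure M {\<omega>\<in>H. X \<omega> \<in> S \<omega>} \<le> c * measure M H + measure M {\<omega>\<in>H. d \<le> measure \<nu> (S \<omega>)}"
proof -
  let ?small = "{\<omega>\<in>H. measure \<nu> (S \<omega>) < d}" and ?large = "{\<omega>\<in>H. d \<le> measure \<nu> (S \<omega>)}"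
  have graph: "set_graph M S \<in> sets (F \<Otimes>\<^sub>M borel)"
    using set_graph_in_sets_pair_measure[OF S] by (simp add: set_graph_subalgebra)
  have "(\<lambda>\<omega>. measure \<nu> (S \<omega>)) \<in> borel_measurable F"
    using measurable_measure_set_graph[OF nu.sigma_finite_measure_axioms, of F S] graph sets_nu
    by (simp add: set_graph_subalgebra)
  then have "{\<omega>\<in>space F. measure \<nu> (S \<omega>) < d} \<in> sets F" "{\<omega>\<in>space F. d \<le> measure \<nu> (S \<omega>)} \<in> sets F"
    by measurable
  moreover have "?small = H \<inter> {\<omega>\<in>space F. measure \<nu> (S \<omega>) < d}" "?large = H \<inter> {\<omega>\<in>space F. d \<le> measure \<nu> (S \<omega>)}"
    using sets.sets_into_space[OF H] by auto
  ultimately have small: "?small \<in> sets F" and large: "?large \<in> sets M"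
    using sets.Int[OF H] sets_subalgebra_subset by presburger+
  have "{\<omega>\<in>?small. X \<omega> \<in> S \<omega>} = ?small \<inter> {\<omega>\<in>space M. X \<omega> \<in> S \<omega>}"
    using sets.sets_into_space[OF H] by (auto simp: space_subalgebra)
  then have hit: "{\<omega>\<in>?small. X \<omega> \<in> S \<omega>} \<in> sets M"
    using sets_X_in[OF graph] sets_subalgebra_subset[OF small] by auto
  have "measure M {\<omega>\<in>H. X \<omega> \<in> S \<omega>} \<le> measure M ({\<omega>\<in>?small. X \<omega> \<in> S \<omega>} \<union> ?large)"
    using hit large by (intro finite_measure_mono) auto
  also have "\<dots> \<le> measure M {\<omega>\<in>?small. X \<omega> \<in> S \<omega>} + measure M ?large"
    using hit large by (rule measure_Un_le)
  also have "measure M {\<omega>\<in>?small. X \<omega> \<in> S \<omega>} \<le> c * measure M ?small"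
    using small S by (rule measure_X_in_small_simple_random_set_le) simp
  also have "\<dots> \<le> c * measure M H"
    using bound_nonneg sets_subalgebra_subset[OF H] by (intro mult_left_mono finite_measure_mono) auto
  finally show ?thesis by simp
qed

lemma approx_X_in_by_simple_random_set:
  assumes S: "set_graph M S \<in> sets (F \<Otimes>\<^sub>M borel)" and "0 < \<tau>"
  obtains S' where "simple_random_set F S'"
    and "measure M {\<omega>\<in>space M. X \<omega> \<in> sym_diff (S \<omega>) (S' \<omega>)} < \<tau>"
    and "measure (restr_to_subalg M F \<Otimes>\<^sub>M \<nu>) (set_graph M (\<lambda>\<omega>. sym_diff (S \<omega>) (S' \<omega>))) < \<tau>"
proof -
  let ?N1 = "distr M (F \<Otimes>\<^sub>M borel) (\<lambda>\<omega>. (\<omega>, X \<omega>))" and ?N2 = "restr_to_subalg M F \<Otimes>\<^sub>M \<nu>"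
  have N1: "finite_measure ?N1" "sets ?N1 = sets (F \<Otimes>\<^sub>M borel)"
    using prob_space_distr[OF measurable_pair_X] by (auto simp: prob_space_def)
  have N2: "finite_measure ?N2" "sets ?N2 = sets (F \<Otimes>\<^sub>M borel)"
    using finite_measure_pair_measure[OF nu.finite_measure_axioms
        finite_measure_restr_to_subalg[OF subalg finite_measure_axioms]] sets_restr_to_subalg[OF subalg] sets_nu
    by auto
  obtain S' where S': "simple_random_set F S'"
    and approx: "measure ?N1 (set_graph M (\<lambda>\<omega>. sym_diff (S \<omega>) (S' \<omega>))) < \<tau>"
      "measure ?N2 (set_graph M (\<lambda>\<omega>. sym_diff (S \<omega>) (S' \<omega>))) < \<tau>"
    using approx_by_simple_random_set[OF N1(1) N2(1) N1(2) N2(2) S[folded set_graph_subalgebra] \<open>0 < \<tau>\<close>]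
    unfolding set_graph_subalgebra by blast
  have "set_graph M (\<lambda>\<omega>. sym_diff (S \<omega>) (S' \<omega>)) = sym_diff (set_graph M S) (set_graph M S')"
    by (auto simp: set_graph_def)
  then have "set_graph M (\<lambda>\<omega>. sym_diff (S \<omega>) (S' \<omega>)) \<in> sets (F \<Otimes>\<^sub>M borel)"
    using S set_graph_in_sets_pair_measure[OF S'] by (auto simp: set_graph_subalgebra)
  from measure_distr[OF measurable_pair_X this] approx(1)
  have "measure M {\<omega>\<in>space M. X \<omega> \<in> sym_diff (S \<omega>) (S' \<omega>)} < \<tau>"
    by (simp add: set_graph_def vimage_def Int_def conj_commute)
  then show ?thesis by (rule that[OF S' _ approx(2)])
qed

lemma measure_X_in_le_sym_diff:
  assumes H: "H \<in> sets F" and S: "set_graph M S \<in> sets (F \<Otimes>\<^sub>M borel)" and S': "simple_random_set F S'"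
  shows "measure M {\<omega>\<in>H. X \<omega> \<in> S \<omega>} \<le> c * measure M H + measure M {\<omega>\<in>H. d \<le> measure \<nu> (S' \<omega>)}
    + measure M {\<omega>\<in>space M. X \<omega> \<in> sym_diff (S \<omega>) (S' \<omega>)}"
proof -
  have HM: "H \<in> sets M" using H by (rule sets_subalgebra_subset)
  have S'_graph: "set_graph M S' \<in> sets (F \<Otimes>\<^sub>M borel)"
    using set_graph_in_sets_pair_measure[OF S'] by (simp add: set_graph_subalgebra)
  have "set_graph M (\<lambda>\<omega>. sym_diff (S \<omega>) (S' \<omega>)) = sym_diff (set_graph M S) (set_graph M S')"
    by (auto simp: set_graph_def)
  then have E: "{\<omega>\<in>space M. X \<omega> \<in> sym_diff (S \<omega>) (S' \<omega>)} \<in> sets M"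
    using S S'_graph by (intro sets_X_in) auto
  have "{\<omega>\<in>H. X \<omega> \<in> S' \<omega>} = H \<inter> {\<omega>\<in>space M. X \<omega> \<in> S' \<omega>}"
    using sets.sets_into_space[OF HM] by auto
  then have hit: "{\<omega>\<in>H. X \<omega> \<in> S' \<omega>} \<in> sets M"
    using HM sets_X_in[OF S'_graph] by auto
  have "measure M {\<omega>\<in>H. X \<omega> \<in> S \<omega>}
      \<le> measure M ({\<omega>\<in>H. X \<omega> \<in> S' \<omega>} \<union> {\<omega>\<in>space M. X \<omega> \<in> sym_diff (S \<omega>) (S' \<omega>)})"
    using hit E sets.sets_into_space[OF HM] by (intro finite_measure_mono) auto
  also have "\<dots> \<le> measure M {\<omega>\<in>H. X \<omega> \<in> S' \<omega>} + measure M {\<omega>\<in>space M. X \<omega> \<in> sym_diff (S \<omega>) (S' \<omega>)}"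
    using hit E by (rule measure_Un_le)
  finally show ?thesis
    using measure_X_in_simple_random_set_le[OF H S'] by simp
qed

lemma measure_X_in_le_of_margin:
  assumes "\<gamma> > 0" and H: "H \<in> sets F" and S: "set_graph M S \<in> sets (F \<Otimes>\<^sub>M borel)"
    and margin: "\<And>\<omega>. \<omega> \<in> H \<Longrightarrow> measure \<nu> (S \<omega>) \<le> d - \<gamma>"
  shows "measure M {\<omega>\<in>H. X \<omega> \<in> S \<omega>} \<le> c * measure M H"
proof (rule field_le_epsilon)
  fix e :: real assume "e > 0"
  define \<tau> where "\<tau> = e * \<gamma> / (\<gamma> + 1)"
  have "\<tau> > 0" using \<open>e > 0\<close> \<open>\<gamma> > 0\<close> by (simp add: \<tau>_def)
  have "\<tau> + \<tau> / \<gamma> = e * (\<gamma> + 1) / (\<gamma> + 1)"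
    using \<open>\<gamma> > 0\<close> by (simp add: \<tau>_def add_divide_distrib distrib_left)
  then have \<tau>_e: "\<tau> + \<tau> / \<gamma> = e" using \<open>\<gamma> > 0\<close> by simp
  obtain S' where S': "simple_random_set F S'"
    and approx: "measure M {\<omega>\<in>space M. X \<omega> \<in> sym_diff (S \<omega>) (S' \<omega>)} < \<tau>"
      "measure (restr_to_subalg M F \<Otimes>\<^sub>M \<nu>) (set_graph M (\<lambda>\<omega>. sym_diff (S \<omega>) (S' \<omega>))) < \<tau>"
    using approx_X_in_by_simple_random_set[OF S \<open>\<tau> > 0\<close>] .
  define E where "E = (\<lambda>\<omega>. sym_diff (S \<omega>) (S' \<omega>))"
  have "set_graph M E = sym_diff (set_graph M S) (set_graph M S')"
    by (auto simp: set_graph_def E_def)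
  then have E: "set_graph M E \<in> sets (F \<Otimes>\<^sub>M borel)"
    using S set_graph_in_sets_pair_measure[OF S'] by (auto simp: set_graph_subalgebra)
  have "(\<lambda>\<omega>. measure \<nu> (E \<omega>)) \<in> borel_measurable M"
    using measurable_measure_set_graph[OF nu.sigma_finite_measure_axioms, of F E] E sets_nu
      measurable_from_subalg[OF subalg] by (simp add: set_graph_subalgebra)
  then have far: "{\<omega>\<in>space M. \<gamma> \<le> measure \<nu> (E \<omega>)} \<in> sets M" by measurable
  \<comment> \<open>Where S' is large, the error E has \<nu>-measure at least \<gamma>, which is unlikely by Markov.\<close>
  have "{\<omega>\<in>H. d \<le> measure \<nu> (S' \<omega>)} \<subseteq> {\<omega>\<in>space M. \<gamma> \<le> measure \<nu> (E \<omega>)}"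
  proof safe
    fix \<omega> assume "\<omega> \<in> H" "d \<le> measure \<nu> (S' \<omega>)"
    moreover from \<open>\<omega> \<in> H\<close> have "\<omega> \<in> space M" using sets.sets_into_space[OF H] by (auto simp: space_subalgebra)
    then have "measure \<nu> (S' \<omega>) \<le> measure \<nu> (S \<omega>) + measure \<nu> (sym_diff (S \<omega>) (S' \<omega>))"
      using sets_Pair1[OF S, of \<omega>] S' sets_nu
      by (intro nu.measure_le_add_measure_sym_diff) (auto simp: vimage_Pair_set_graph simple_random_set_def space_subalgebra)
    ultimately show "\<gamma> \<le> measure \<nu> (E \<omega>)"
      unfolding E_def using margin[OF \<open>\<omega> \<in> H\<close>] by linarith
  qed (use sets.sets_into_space[OF H] in \<open>auto simp: space_subalgebra\<close>)
  then have "measure M {\<omega>\<in>H. d \<le> measure \<nu> (S' \<omega>)} \<le> measure M {\<omega>\<in>space M. \<gamma> \<le> measure \<nu> (E \<omega>)}"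
    using far by (rule finite_measure_mono)
  also have "\<dots> \<le> \<tau> / \<gamma>"
    using measure_section_ge_le[OF nu.finite_measure_axioms _ \<open>\<gamma> > 0\<close>, of E] E sets_nu approx(2) \<open>\<gamma> > 0\<close>
    by (simp add: E_def field_simps)
  finally show "measure M {\<omega>\<in>H. X \<omega> \<in> S \<omega>} \<le> c * measure M H + e"
    using measure_X_in_le_sym_diff[OF H S S'] approx(1) \<tau>_e by linarith
qed

theorem AE_cond_exp_indicator_le:
  assumes S: "set_graph M S \<in> sets (F \<Otimes>\<^sub>M borel)"
    and small: "\<And>\<omega>. \<omega> \<in> space M \<Longrightarrow> measure \<nu> (S \<omega>) < d"
  shows "AE \<omega> in M. real_cond_exp M F (\<lambda>\<omega>. indicator (S \<omega>) (X \<omega>)) \<omega> \<le> c"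
proof -
  let ?p = "real_cond_exp M F (\<lambda>\<omega>. indicator (S \<omega>) (X \<omega>))"
  define G where "G m = {\<omega>\<in>space M. measure \<nu> (S \<omega>) \<le> d - 1 / Suc m}" for m :: nat
  have "(\<lambda>\<omega>. measure \<nu> (S \<omega>)) \<in> borel_measurable F"
    using measurable_measure_set_graph[OF nu.sigma_finite_measure_axioms, of F S] S sets_nu
    by (simp add: set_graph_subalgebra)
  then have G: "G m \<in> sets F" for m
    unfolding G_def space_subalgebra[symmetric] by measurable
  have "AE \<omega> in M. \<omega> \<in> G m \<longrightarrow> ?p \<omega> \<le> c" for m
  proof (rule AE_cond_exp_le_of_set_integral_le[OF integrable_indicator_X_in[OF S] G])
    fix H assume H: "H \<in> sets F" "H \<subseteq> G m"
    have "(\<integral>\<omega>. indicator H \<omega> * indicator (S \<omega>) (X \<omega>) \<partial>M) = measure M {\<omega>\<in>H. X \<omega> \<in> S \<omega>}"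
      using S sets_subalgebra_subset[OF H(1)] by (rule integral_indicator_X_in)
    also have "\<dots> \<le> c * measure M H"
      using H by (intro measure_X_in_le_of_margin[OF _ H(1) S]) (auto simp: G_def)
    finally show "(\<integral>\<omega>. indicator H \<omega> * indicator (S \<omega>) (X \<omega>) \<partial>M) \<le> c * measure M H" .
  qed
  then have "AE \<omega> in M. \<forall>m. \<omega> \<in> G m \<longrightarrow> ?p \<omega> \<le> c"
    by (intro AE_all_countable[THEN iffD2] allI)
  moreover have "\<exists>m. \<omega> \<in> G m" if \<omega>: "\<omega> \<in> space M" for \<omega>
  proof -
    have "0 < d - measure \<nu> (S \<omega>)" using small[OF \<omega>] by simp
    then obtain m where "1 / real (Suc m) < d - measure \<nu> (S \<omega>)" by (rule nat_approx_posE)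
    then show ?thesis using \<omega> by (auto simp: G_def intro!: exI[of _ m])
  qed
  ultimately show ?thesis by (auto elim: AE_mp intro: AE_I2)
qed

end

section \<open>A strong law for bounded martingale differences\<close>

lemma filterlim_floor_sqrt_at_top: "filterlim floor_sqrt at_top at_top"
  unfolding filterlim_at_top eventually_at_top_linorder by (blast intro: le_floor_sqrtI order_trans)

lemma abs_sum_le_square_gap:
  fixes y :: "nat \<Rightarrow> real"
  assumes bound: "\<And>n. \<bar>y n\<bar> \<le> B" and "K\<^sup>2 \<le> N" "N < (Suc K)\<^sup>2"
  shows "\<bar>\<Sum>n=1..N. y n\<bar> \<le> \<bar>\<Sum>n=1..K\<^sup>2. y n\<bar> + 2 * real K * B"
proof -
  have "(\<Sum>n=1..N. y n) = (\<Sum>n=1..K\<^sup>2. y n) + (\<Sum>n=K\<^sup>2+1..K\<^sup>2 + (N - K\<^sup>2). y n)"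
    using sum.ub_add_nat[of 1 "K\<^sup>2" y "N - K\<^sup>2"] \<open>K\<^sup>2 \<le> N\<close> by simp
  moreover have "\<bar>\<Sum>n=K\<^sup>2+1..K\<^sup>2 + (N - K\<^sup>2). y n\<bar> \<le> (\<Sum>n=K\<^sup>2+1..K\<^sup>2 + (N - K\<^sup>2). \<bar>y n\<bar>)"
    by (rule sum_abs)
  moreover have "(\<Sum>n=K\<^sup>2+1..K\<^sup>2 + (N - K\<^sup>2). \<bar>y n\<bar>) \<le> real (N - K\<^sup>2) * B"
    using sum_bounded_above[of "{K\<^sup>2+1..K\<^sup>2 + (N - K\<^sup>2)}" "\<lambda>n. \<bar>y n\<bar>", OF bound] by simp
  moreover have "real (N - K\<^sup>2) \<le> 2 * real K"
    using \<open>N < (Suc K)\<^sup>2\<close> by (simp add: power2_eq_square)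
  moreover have "0 \<le> B" using bound[of 0] by simp
  ultimately show ?thesis by (smt (verit) mult_right_mono)
qed

lemma average_tendsto_zero_of_squares:
  fixes y :: "nat \<Rightarrow> real"
  assumes bound: "\<And>n. \<bar>y n\<bar> \<le> B"
    and squares: "(\<lambda>k. (\<Sum>n=1..k\<^sup>2. y n) / (real k)\<^sup>2) \<longlonglongrightarrow> 0"
  shows "(\<lambda>N. (\<Sum>n=1..N. y n) / N) \<longlonglongrightarrow> 0"
proof (rule Lim_null_comparison)
  define a where "a K = \<bar>\<Sum>n=1..K\<^sup>2. y n\<bar> / (real K)\<^sup>2 + 2 * B / real K" for K :: nat
  have "a \<longlonglongrightarrow> 0 + 2 * B * 0"
    unfolding a_def divide_inverse mult.assoc[symmetric]
    using tendsto_rabs_zero[OF squares[unfolded divide_inverse]]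
    by (intro tendsto_add tendsto_mult tendsto_const lim_inverse_n) (simp add: abs_mult)
  then show "(\<lambda>N. a (floor_sqrt N)) \<longlonglongrightarrow> 0"
    using filterlim_compose[OF _ filterlim_floor_sqrt_at_top] by simp
  show "eventually (\<lambda>N. norm ((\<Sum>n=1..N. y n) / N) \<le> a (floor_sqrt N)) sequentially"
    using eventually_ge_at_top[of 1]
  proof eventually_elim
    case (elim N)
    define K where "K = floor_sqrt N"
    have "K > 0" "K\<^sup>2 \<le> N" "N < (Suc K)\<^sup>2"
      using elim Suc_floor_sqrt_power2_gt[of N] by (auto simp: K_def)
    have "(real K)\<^sup>2 \<le> real N" using \<open>K\<^sup>2 \<le> N\<close> by (metis of_nat_le_iff of_nat_power)
    have "norm ((\<Sum>n=1..N. y n) / N) = \<bar>\<Sum>n=1..N. y n\<bar> / real N" by simp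
    also have "\<dots> \<le> \<bar>\<Sum>n=1..N. y n\<bar> / (real K)\<^sup>2"
      using \<open>(real K)\<^sup>2 \<le> real N\<close> \<open>K > 0\<close> elim by (intro divide_left_mono) auto
    also have "\<dots> \<le> (\<bar>\<Sum>n=1..K\<^sup>2. y n\<bar> + 2 * real K * B) / (real K)\<^sup>2"
      using abs_sum_le_square_gap[OF bound \<open>K\<^sup>2 \<le> N\<close> \<open>N < (Suc K)\<^sup>2\<close>] by (simp add: divide_right_mono)
    also have "\<dots> = a K"
      using \<open>K > 0\<close> by (simp add: a_def add_divide_distrib power2_eq_square)
    finally show ?case by (simp add: K_def)
  qed
qed

lemma abs_sum_le_card_mult:
  fixes y :: "nat \<Rightarrow> real"
  assumes "\<And>n. \<bar>y n\<bar> \<le> B"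
  shows "\<bar>\<Sum>n=1..N. y n\<bar> \<le> real N * B"
proof -
  have "\<bar>\<Sum>n=1..N. y n\<bar> \<le> (\<Sum>n=1..N. \<bar>y n\<bar>)" by (rule sum_abs)
  also have "\<dots> \<le> real (card {1..N}) * B" by (rule sum_bounded_above) (rule assms)
  finally show ?thesis by simp
qed

lemma tendsto_zero_of_eventually_abs_less:
  fixes s q :: "nat \<Rightarrow> real"
  assumes q: "\<And>k. 0 < q k" and small: "\<And>j. eventually (\<lambda>k. \<bar>s k\<bar> < q k / real (Suc j)) sequentially"
  shows "(\<lambda>k. s k / q k) \<longlonglongrightarrow> 0"
  unfolding tendsto_iff
proof (intro allI impI)
  fix e :: real assume "e > 0"
  then obtain j where j: "1 / real (Suc j) < e" by (rule nat_approx_posE)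
  from small[of j] show "eventually (\<lambda>k. dist (s k / q k) 0 < e) sequentially"
  proof (elim eventually_mono)
    fix k assume "\<bar>s k\<bar> < q k / real (Suc j)"
    then have "\<bar>s k\<bar> / q k < 1 / real (Suc j)" using q[of k] by (simp add: field_simps)
    then show "dist (s k / q k) 0 < e" using j q[of k] by simp
  qed
qed

lemma limsup_le_of_le_add_tendsto_zero:
  fixes u r :: "nat \<Rightarrow> real"
  assumes "\<And>N. u N \<le> c + r N" and "r \<longlonglongrightarrow> 0"
  shows "limsup (\<lambda>N. ereal (u N)) \<le> ereal c"
proof -
  have "(\<lambda>N. ereal (c + r N)) \<longlonglongrightarrow> ereal c"
    using tendsto_add[OF tendsto_const assms(2), of c] by (simp add: lim_ereal)
  then have "limsup (\<lambda>N. ereal (c + r N)) = ereal c"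
    by (rule lim_imp_Limsup[OF trivial_limit_sequentially])
  moreover have "limsup (\<lambda>N. ereal (u N)) \<le> limsup (\<lambda>N. ereal (c + r N))"
    using assms(1) by (intro Limsup_mono) simp
  ultimately show ?thesis by simp
qed

context prob_space
begin

lemma integrable_bounded:
  fixes f :: "'a \<Rightarrow> real"
  assumes "f \<in> borel_measurable M" and "\<And>\<omega>. \<bar>f \<omega>\<bar> \<le> K"
  shows "integrable M f"
  using assms by (intro integrable_const_bound[where B=K]) auto

lemma integrable_square_sum:
  fixes Y :: "nat \<Rightarrow> 'a \<Rightarrow> real"
  assumes "\<And>n. Y n \<in> borel_measurable M" and "\<And>n \<omega>. \<bar>Y n \<omega>\<bar> \<le> B"
  shows "integrable M (\<lambda>\<omega>. (\<Sum>n=1..N. Y n \<omega>)\<^sup>2)"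
proof (rule integrable_bounded)
  show "(\<lambda>\<omega>. (\<Sum>n=1..N. Y n \<omega>)\<^sup>2) \<in> borel_measurable M" using assms(1) by measurable
  have "0 \<le> B" using assms(2)[of 0] by (meson abs_ge_zero order_trans)
  then show "\<bar>(\<Sum>n=1..N. Y n \<omega>)\<^sup>2\<bar> \<le> (real N * B)\<^sup>2" for \<omega>
    using abs_sum_le_card_mult[OF assms(2)] by (simp add: power2_le_iff_abs_le)
qed

lemma integral_square_sum_le:
  fixes Y :: "nat \<Rightarrow> 'a \<Rightarrow> real"
  assumes Y: "\<And>n. Y n \<in> borel_measurable M" and bound: "\<And>n \<omega>. \<bar>Y n \<omega>\<bar> \<le> B"
    and orth: "\<And>N. (\<integral>\<omega>. (\<Sum>n=1..N. Y n \<omega>) * Y (Suc N) \<omega> \<partial>M) = 0"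
  shows "(\<integral>\<omega>. (\<Sum>n=1..N. Y n \<omega>)\<^sup>2 \<partial>M) \<le> real N * B\<^sup>2"
proof (induction N)
  case 0
  then show ?case by simp
next
  case (Suc N)
  let ?S = "\<lambda>\<omega>. \<Sum>n=1..N. Y n \<omega>" and ?Y = "Y (Suc N)"
  have "0 \<le> B" using bound[of 0] by (meson abs_ge_zero order_trans)
  have SY_bound: "\<bar>2 * (?S \<omega> * ?Y \<omega>)\<bar> \<le> 2 * (real N * B * B)" for \<omega>
    unfolding abs_mult using abs_sum_le_card_mult[OF bound] bound \<open>0 \<le> B\<close>
    by (intro mult_left_mono mult_mono) auto
  have int_S2: "integrable M (\<lambda>\<omega>. (?S \<omega>)\<^sup>2)"
    using Y bound by (rule integrable_square_sum)
  have int_Y2: "integrable M (\<lambda>\<omega>. (?Y \<omega>)\<^sup>2)"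
    using Y bound \<open>0 \<le> B\<close> by (intro integrable_bounded[where K="B\<^sup>2"]) (auto simp: power2_le_iff_abs_le)
  have int_SY: "integrable M (\<lambda>\<omega>. 2 * (?S \<omega> * ?Y \<omega>))"
    using Y SY_bound by (intro integrable_bounded) auto
  have "(\<integral>\<omega>. (\<Sum>n=1..Suc N. Y n \<omega>)\<^sup>2 \<partial>M) = (\<integral>\<omega>. (?S \<omega>)\<^sup>2 + 2 * (?S \<omega> * ?Y \<omega>) + (?Y \<omega>)\<^sup>2 \<partial>M)"
    by (simp add: power2_eq_square algebra_simps)
  also have "\<dots> = (\<integral>\<omega>. (?S \<omega>)\<^sup>2 \<partial>M) + 2 * (\<integral>\<omega>. ?S \<omega> * ?Y \<omega> \<partial>M) + (\<integral>\<omega>. (?Y \<omega>)\<^sup>2 \<partial>M)"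
    using int_S2 int_SY int_Y2 by simp
  also have "\<dots> \<le> real N * B\<^sup>2 + 2 * 0 + B\<^sup>2"
  proof -
    have "(\<integral>\<omega>. (?Y \<omega>)\<^sup>2 \<partial>M) \<le> B\<^sup>2"
      using int_Y2 bound \<open>0 \<le> B\<close> by (intro integral_le_const AE_I2) (auto simp: power2_le_iff_abs_le)
    then show ?thesis using Suc.IH orth[of N] by linarith
  qed
  finally show ?case by (simp add: algebra_simps)
qed

lemma measure_abs_sum_ge_le:
  fixes Y :: "nat \<Rightarrow> 'a \<Rightarrow> real"
  assumes Y: "\<And>n. Y n \<in> borel_measurable M" and bound: "\<And>n \<omega>. \<bar>Y n \<omega>\<bar> \<le> B"
    and orth: "\<And>N. (\<integral>\<omega>. (\<Sum>n=1..N. Y n \<omega>) * Y (Suc N) \<omega> \<partial>M) = 0" and "0 < a"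
  shows "measure M {\<omega>\<in>space M. a \<le> \<bar>\<Sum>n=1..N. Y n \<omega>\<bar>} \<le> real N * B\<^sup>2 / a\<^sup>2"
proof -
  have "measure M {\<omega>\<in>space M. a \<le> \<bar>\<Sum>n=1..N. Y n \<omega>\<bar>} \<le> (\<integral>\<omega>. (\<Sum>n=1..N. Y n \<omega>)\<^sup>2 \<partial>M) / a\<^sup>2"
    using Y \<open>0 < a\<close> by (intro second_moment_method integrable_square_sum[OF Y bound]) auto
  also have "\<dots> \<le> real N * B\<^sup>2 / a\<^sup>2"
    using integral_square_sum_le[OF Y bound orth] by (intro divide_right_mono) auto
  finally show ?thesis .
qed

lemma AE_eventually_abs_sum_squares_less:
  fixes Y :: "nat \<Rightarrow> 'a \<Rightarrow> real"
  assumes Y: "\<And>n. Y n \<in> borel_measurable M" and bound: "\<And>n \<omega>. \<bar>Y n \<omega>\<bar> \<le> B"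
    and orth: "\<And>N. (\<integral>\<omega>. (\<Sum>n=1..N. Y n \<omega>) * Y (Suc N) \<omega> \<partial>M) = 0"
  shows "AE \<omega> in M. eventually (\<lambda>k. \<bar>\<Sum>n=1..(Suc k)\<^sup>2. Y n \<omega>\<bar> < (real (Suc k))\<^sup>2 / Suc j) sequentially"
proof -
  define Ev where "Ev k = {\<omega>\<in>space M. (real (Suc k))\<^sup>2 / Suc j \<le> \<bar>\<Sum>n=1..(Suc k)\<^sup>2. Y n \<omega>\<bar>}" for k
  have Ev: "Ev k \<in> sets M" for k unfolding Ev_def using Y by measurable
  have Ev_le: "measure M (Ev k) \<le> B\<^sup>2 * (real (Suc j))\<^sup>2 * inverse (real (Suc k) ^ 2)" for k
  proof -
    have alg: "q\<^sup>2 * B\<^sup>2 / (q\<^sup>2 / p)\<^sup>2 = B\<^sup>2 * p\<^sup>2 * inverse (q ^ 2)" if "q > 0" "p > 0" for p q :: real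
      using that by (simp add: field_simps power2_eq_square)
    have "measure M (Ev k) \<le> real ((Suc k)\<^sup>2) * B\<^sup>2 / ((real (Suc k))\<^sup>2 / Suc j)\<^sup>2"
      unfolding Ev_def by (rule measure_abs_sum_ge_le[OF Y bound orth]) simp
    also have "\<dots> = B\<^sup>2 * (real (Suc j))\<^sup>2 * inverse (real (Suc k) ^ 2)"
      unfolding of_nat_power by (rule alg) simp_all
    finally show ?thesis .
  qed
  have "summable (\<lambda>k. inverse (real (Suc k) ^ 2))"
    using inverse_power_summable[of 2, where 'a=real] summable_Suc_iff[of "\<lambda>n. inverse (real n ^ 2)"]
    by simp
  then have "summable (\<lambda>k. B\<^sup>2 * (real (Suc j))\<^sup>2 * inverse (real (Suc k) ^ 2))"
    by (rule summable_mult)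
  then have "summable (\<lambda>k. measure M (Ev k))"
    by (rule summable_comparison_test'[where N=0]) (use Ev_le in simp)
  then have "AE \<omega> in M. eventually (\<lambda>k. \<omega> \<in> space M - Ev k) sequentially"
    using Ev by (intro borel_cantelli_AE1) (auto simp: emeasure_eq_measure)
  then show ?thesis by eventually_elim (auto simp: Ev_def not_le elim: eventually_mono)
qed

lemma AE_sum_squares_tendsto_zero:
  fixes Y :: "nat \<Rightarrow> 'a \<Rightarrow> real"
  assumes Y: "\<And>n. Y n \<in> borel_measurable M" and bound: "\<And>n \<omega>. \<bar>Y n \<omega>\<bar> \<le> B"
    and orth: "\<And>N. (\<integral>\<omega>. (\<Sum>n=1..N. Y n \<omega>) * Y (Suc N) \<omega> \<partial>M) = 0"
  shows "AE \<omega> in M. (\<lambda>k. (\<Sum>n=1..k\<^sup>2. Y n \<omega>) / (real k)\<^sup>2) \<longlonglongrightarrow> 0"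
proof -
  have "AE \<omega> in M. \<forall>j. eventually (\<lambda>k. \<bar>\<Sum>n=1..(Suc k)\<^sup>2. Y n \<omega>\<bar> < (real (Suc k))\<^sup>2 / Suc j) sequentially"
    using AE_eventually_abs_sum_squares_less[OF Y bound orth] by (intro AE_all_countable[THEN iffD2] allI)
  then show ?thesis
  proof eventually_elim
    case (elim \<omega>)
    then have "(\<lambda>k. (\<Sum>n=1..(Suc k)\<^sup>2. Y n \<omega>) / (real (Suc k))\<^sup>2) \<longlonglongrightarrow> 0"
      by (intro tendsto_zero_of_eventually_abs_less) auto
    then show ?case using LIMSEQ_imp_Suc[of "\<lambda>k. (\<Sum>n=1..k\<^sup>2. Y n \<omega>) / (real k)\<^sup>2"] by simp
  qed
qed

end

lemma (in finite_measure_subalgebra) integral_mult_sub_cond_exp: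
  fixes Z f q :: "'a \<Rightarrow> real"
  assumes Z: "integrable M Z" and f: "f \<in> borel_measurable F" "\<And>\<omega>. \<bar>f \<omega>\<bar> \<le> K"
    and q: "q \<in> borel_measurable M" "AE \<omega> in M. q \<omega> = real_cond_exp M F Z \<omega>"
  shows "(\<integral>\<omega>. f \<omega> * (Z \<omega> - q \<omega>) \<partial>M) = 0"
proof -
  have f_M: "f \<in> borel_measurable M" using measurable_from_subalg[OF subalg f(1)] .
  have "0 \<le> K" using f(2)[of undefined] by (meson abs_ge_zero order_trans)
  have int_fZ: "integrable M (\<lambda>\<omega>. f \<omega> * Z \<omega>)"
    using Z f_M f(2) \<open>0 \<le> K\<close>
    by (intro Bochner_Integration.integrable_bound[OF integrable_mult_right[OF Z, of K]])
      (auto simp: abs_mult intro!: mult_right_mono)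
  have int_fp: "integrable M (\<lambda>\<omega>. f \<omega> * real_cond_exp M F Z \<omega>)"
    using real_cond_exp_intg(1)[OF int_fZ f(1)] Z by simp
  have fq_fp: "AE \<omega> in M. f \<omega> * q \<omega> = f \<omega> * real_cond_exp M F Z \<omega>"
    using q(2) by eventually_elim simp
  have int_fq: "integrable M (\<lambda>\<omega>. f \<omega> * q \<omega>)"
    using integrable_cong_AE[OF _ _ fq_fp] int_fp f_M q(1) by simp
  have "(\<integral>\<omega>. f \<omega> * (Z \<omega> - q \<omega>) \<partial>M) = (\<integral>\<omega>. f \<omega> * Z \<omega> \<partial>M) - (\<integral>\<omega>. f \<omega> * q \<omega> \<partial>M)"
    using int_fZ int_fq by (simp add: right_diff_distrib)
  also have "(\<integral>\<omega>. f \<omega> * q \<omega> \<partial>M) = (\<integral>\<omega>. f \<omega> * real_cond_exp M F Z \<omega> \<partial>M)"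
    using f_M q(1) fq_fp by (intro integral_cong_AE) auto
  also have "\<dots> = (\<integral>\<omega>. f \<omega> * Z \<omega> \<partial>M)"
    using real_cond_exp_intg(2)[OF int_fZ f(1)] Z by simp
  finally show ?thesis by simp
qed

theorem (in prob_space) AE_average_tendsto_zero:
  fixes Y :: "nat \<Rightarrow> 'a \<Rightarrow> real"
  assumes Y: "\<And>n. Y n \<in> borel_measurable M" and bound: "\<And>n \<omega>. \<bar>Y n \<omega>\<bar> \<le> B"
    and orth: "\<And>N. (\<integral>\<omega>. (\<Sum>n=1..N. Y n \<omega>) * Y (Suc N) \<omega> \<partial>M) = 0"
  shows "AE \<omega> in M. (\<lambda>N. (\<Sum>n=1..N. Y n \<omega>) / real N) \<longlonglongrightarrow> 0"
  using AE_sum_squares_tendsto_zero[OF Y bound orth]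
  by eventually_elim (rule average_tendsto_zero_of_squares[OF bound])

lemma (in prob_space) integral_martingale_difference_orthogonal:
  fixes F :: "nat \<Rightarrow> 'a measure" and Z q :: "nat \<Rightarrow> 'a \<Rightarrow> real"
  assumes sub: "\<And>k. subalgebra M (F k)" and mono: "\<And>k m. k \<le> m \<Longrightarrow> sets (F k) \<subseteq> sets (F m)"
    and Z: "\<And>k. Z k \<in> borel_measurable (F (Suc k))" "\<And>k. integrable M (Z k)"
    and q: "\<And>k. q k \<in> borel_measurable (F k)" "\<And>k. AE \<omega> in M. q k \<omega> = real_cond_exp M (F k) (Z k) \<omega>"
    and bound: "\<And>k \<omega>. \<bar>Z k \<omega> - q k \<omega>\<bar> \<le> B"
  shows "(\<integral>\<omega>. (\<Sum>n=1..N. Z n \<omega> - q n \<omega>) * (Z (Suc N) \<omega> - q (Suc N) \<omega>) \<partial>M) = 0"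
proof -
  have sub_mono: "subalgebra (F m) (F k)" if "k \<le> m" for k m
    using sub[of k] sub[of m] mono[OF that] by (auto simp: subalgebra_def)
  have "(\<lambda>\<omega>. Z n \<omega> - q n \<omega>) \<in> borel_measurable (F (Suc N))" if "n \<le> N" for n
  proof -
    have "Z n \<in> borel_measurable (F (Suc N))" "q n \<in> borel_measurable (F (Suc N))"
      using measurable_from_subalg[OF sub_mono[of "Suc n" "Suc N"] Z(1)]
        measurable_from_subalg[OF sub_mono[of n "Suc N"] q(1)] that by simp_all
    then show ?thesis by measurable
  qed
  then have "(\<lambda>\<omega>. \<Sum>n=1..N. Z n \<omega> - q n \<omega>) \<in> borel_measurable (F (Suc N))"
    by (intro borel_measurable_sum) auto
  then show ?thesis
    using sub by (intro finite_measure_subalgebra.integral_mult_sub_cond_exp[OF _ Z(2) _ abs_sum_le_card_mult[OF bound]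
        measurable_from_subalg[OF sub q(1)] q(2)]) unfold_locales
qed

theorem (in prob_space) limsup_average_le_of_cond_exp_le:
  fixes F :: "nat \<Rightarrow> 'a measure" and Z :: "nat \<Rightarrow> 'a \<Rightarrow> real"
  assumes sub: "\<And>k. subalgebra M (F k)" and mono: "\<And>k m. k \<le> m \<Longrightarrow> sets (F k) \<subseteq> sets (F m)"
    and Z: "\<And>k. Z k \<in> borel_measurable (F (Suc k))"
    and Z_nonneg: "\<And>k \<omega>. 0 \<le> Z k \<omega>" and Z_le_1: "\<And>k \<omega>. Z k \<omega> \<le> 1"
    and "0 \<le> c" and cond: "\<And>k. AE \<omega> in M. real_cond_exp M (F k) (Z k) \<omega> \<le> c"
  shows "AE \<omega> in M. limsup (\<lambda>N. ereal (1 / real N * (\<Sum>n=1..N. Z n \<omega>))) \<le> ereal c"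
proof -
  have F: "finite_measure_subalgebra M (F k)" for k
    using sub by unfold_locales
  have Z_M: "Z k \<in> borel_measurable M" for k using measurable_from_subalg[OF sub Z] .
  have Z_int: "integrable M (Z k)" for k
    using Z_M Z_nonneg Z_le_1 by (intro integrable_bounded[where K=1]) (auto simp: abs_le_iff intro: order_trans)
  \<comment> \<open>A version of the conditional expectation valued in [0, c] everywhere, so that Z - q is bounded.\<close>
  define q where "q k \<omega> = max 0 (min c (real_cond_exp M (F k) (Z k) \<omega>))" for k \<omega>
  have q_meas: "q k \<in> borel_measurable (F k)" for k
    unfolding q_def by measurable
  have q_ae: "AE \<omega> in M. q k \<omega> = real_cond_exp M (F k) (Z k) \<omega>" for k
  proof -
    have "AE \<omega> in M. 0 \<le> real_cond_exp M (F k) (Z k) \<omega>"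
      using sigma_finite_subalgebra.real_cond_exp_pos[OF finite_measure_subalgebra_is_sigma_finite[OF F]]
        Z_nonneg Z_M by simp
    with cond[of k] show ?thesis by eventually_elim (auto simp: q_def)
  qed
  have bound: "\<bar>Z k \<omega> - q k \<omega>\<bar> \<le> 1 + c" for k \<omega>
    using Z_nonneg[of k \<omega>] Z_le_1[of k \<omega>] \<open>0 \<le> c\<close> unfolding q_def by auto
  have "AE \<omega> in M. (\<lambda>N. (\<Sum>n=1..N. Z n \<omega> - q n \<omega>) / real N) \<longlonglongrightarrow> 0"
    using Z_M measurable_from_subalg[OF sub q_meas] bound
      integral_martingale_difference_orthogonal[where F=F and Z=Z and q=q, OF sub mono Z Z_int q_meas q_ae bound]
    by (intro AE_average_tendsto_zero) auto
  then show ?thesis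
  proof eventually_elim
    case (elim \<omega>)
    show ?case
    proof (rule limsup_le_of_le_add_tendsto_zero[OF _ elim])
      fix N
      have "(\<Sum>n=1..N. q n \<omega>) \<le> real N * c"
        using sum_bounded_above[of "{1..N}" "\<lambda>n. q n \<omega>" c] \<open>0 \<le> c\<close> by (simp add: q_def)
      then show "1 / real N * (\<Sum>n=1..N. Z n \<omega>) \<le> c + (\<Sum>n=1..N. Z n \<omega> - q n \<omega>) / real N"
        using \<open>0 \<le> c\<close> by (cases "N = 0") (auto simp: field_simps sum_subtractf)
    qed
  qed
qed

section \<open>The natural filtration and the main theorem\<close>

lemma nat_past_generators_subset: "{X i -` B \<inter> space M | i B. i < n \<and> B \<in> sets borel} \<subseteq> Pow (space M)"
  by auto

lemma space_nat_past [simp]: "space (nat_past M X n) = space M"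
  unfolding nat_past_def using nat_past_generators_subset by (rule space_measure_of)

lemma set_graph_nat_past: "set_graph (nat_past M X n) S = set_graph M S"
  by (simp add: set_graph_def)

lemma sets_nat_past:
  "sets (nat_past M X n) = sigma_sets (space M) {X i -` B \<inter> space M | i B. i < n \<and> B \<in> sets borel}"
  unfolding nat_past_def using nat_past_generators_subset by (rule sets_measure_of)

lemma sets_nat_past_mono: "m \<le> n \<Longrightarrow> sets (nat_past M X m) \<subseteq> sets (nat_past M X n)"
  unfolding sets_nat_past by (rule sigma_sets_subseteq) (blast dest: less_le_trans)

lemma subalgebra_nat_past:
  assumes "\<And>i. X i \<in> borel_measurable M"
  shows "subalgebra M (nat_past M X n)"
  unfolding subalgebra_def sets_nat_past
  using assms by (auto intro!: sets.sigma_sets_subset measurable_sets)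

lemma measurable_nat_past:
  fixes X :: "nat \<Rightarrow> 'b \<Rightarrow> 'a::topological_space"
  assumes "i < n"
  shows "X i \<in> borel_measurable (nat_past M X n)"
proof (rule measurableI)
  fix B :: "'a set" assume "B \<in> sets borel"
  then show "X i -` B \<inter> space (nat_past M X n) \<in> sets (nat_past M X n)"
    using assms unfolding sets_nat_past by (auto intro: sigma_sets.Basic)
qed simp

lemma cond_prob_le_1:
  assumes "prob_space M" and X: "\<And>i. X i \<in> borel_measurable M" and B: "B \<in> sets borel"
  shows "AE \<omega> in M. cond_prob M X n B \<omega> \<le> 1"
proof -
  interpret prob_space M by fact
  interpret finite_measure_subalgebra M "nat_past M X n"
    using subalgebra_nat_past[OF X] by unfold_locales
  show ?thesis
    unfolding cond_prob_def using X B
    by (intro real_cond_exp_le_c integrable_bounded[where K=1]) (auto simp: indicator_def)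
qed

lemma unif_dom_rate_cond_prob_less:
  assumes "prob_space M" and X: "\<And>i. X i \<in> borel_measurable M" and "unif_dom_rate M X \<nu> \<epsilon>"
    and "sets \<nu> = sets borel" and "0 < \<delta>" and B: "B \<in> sets borel" "measure \<nu> B < \<delta>"
  shows "AE \<omega> in M. cond_prob M X n B \<omega> < \<epsilon> \<delta>"
proof -
  have "AE \<omega> in M. (\<Squnion>n. cond_prob M X n B \<omega>) < \<epsilon> \<delta>"
    using assms(3-) unfolding unif_dom_rate_def by auto
  moreover have "AE \<omega> in M. \<forall>n. cond_prob M X n B \<omega> \<le> 1"
    using cond_prob_le_1[OF assms(1) X B(1)] by (intro AE_all_countable[THEN iffD2] allI)
  ultimately show ?thesis
  proof eventually_elim
    case (elim \<omega>)
    then have "cond_prob M X n B \<omega> \<le> (\<Squnion>n. cond_prob M X n B \<omega>)"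
      by (intro cSUP_upper bdd_aboveI2) auto
    with elim show ?case by linarith
  qed
qed

lemma cond_dominated_nat_past:
  assumes "prob_space M" "finite_measure \<nu>" "sets \<nu> = sets borel" and X: "\<And>i. X i \<in> borel_measurable M"
    and "unif_dom_rate M X \<nu> \<epsilon>" and "0 < \<delta>"
  shows "cond_dominated M (nat_past M X n) \<nu> (X n) (\<epsilon> \<delta>) \<delta>"
proof -
  interpret prob_space M by fact
  interpret finite_measure_subalgebra M "nat_past M X n"
    using subalgebra_nat_past[OF X] by unfold_locales
  have less: "AE \<omega> in M. real_cond_exp M (nat_past M X n) (\<lambda>\<omega>. indicator B (X n \<omega>)) \<omega> < \<epsilon> \<delta>"
    if "B \<in> sets borel" "measure \<nu> B < \<delta>" for B
    using unif_dom_rate_cond_prob_less[OF assms(1) X assms(5,3,6) that] by (simp add: cond_prob_def)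
  have "AE \<omega> in M. real_cond_exp M (nat_past M X n) (\<lambda>_. 0) \<omega> < \<epsilon> \<delta>"
    using less[of "{}"] \<open>0 < \<delta>\<close> by simp
  moreover have "AE \<omega> in M. real_cond_exp M (nat_past M X n) (\<lambda>_. 0) \<omega> = 0"
    by (rule real_cond_exp_F_meas) simp_all
  ultimately have "AE \<omega> in M. 0 < \<epsilon> \<delta>" by eventually_elim simp
  then have "0 \<le> \<epsilon> \<delta>" by simp
  show ?thesis
  proof (intro cond_dominated.intro cond_dominated_axioms.intro)
    show "AE \<omega> in M. real_cond_exp M (nat_past M X n) (\<lambda>\<omega>. indicator B (X n \<omega>)) \<omega> \<le> \<epsilon> \<delta>"
      if "B \<in> sets borel" "measure \<nu> B < \<delta>" for B
      using less[OF that] by eventually_elim simp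
  qed (use assms \<open>0 \<le> \<epsilon> \<delta>\<close> in \<open>simp_all add: prob_space_axioms finite_measure_subalgebra_axioms\<close>)
qed

lemma set_graph_truncate_in_sets:
  assumes "sigma_finite_measure \<nu>" "sets \<nu> = sets borel" and S: "set_graph F S \<in> sets (F \<Otimes>\<^sub>M borel)"
  shows "set_graph F (\<lambda>\<omega>. if emeasure \<nu> (S \<omega>) < t then S \<omega> else {}) \<in> sets (F \<Otimes>\<^sub>M borel)"
proof -
  have "(\<lambda>\<omega>. emeasure \<nu> (S \<omega>)) \<in> borel_measurable F"
    using measurable_emeasure_set_graph[OF assms(1)] S assms(2) by simp
  then have "{\<omega>\<in>space F. emeasure \<nu> (S \<omega>) < t} \<times> UNIV \<in> sets (F \<Otimes>\<^sub>M borel)"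
    by (intro pair_measureI) auto
  moreover have "set_graph F (\<lambda>\<omega>. if emeasure \<nu> (S \<omega>) < t then S \<omega> else {}) =
      set_graph F S \<inter> {\<omega>\<in>space F. emeasure \<nu> (S \<omega>) < t} \<times> UNIV"
    by (auto simp: set_graph_def split: if_splits)
  ultimately show ?thesis using S by auto
qed

lemma limsup_average_eventually_cong:
  fixes w z :: "nat \<Rightarrow> real"
  assumes "eventually (\<lambda>n. w n = z n) sequentially"
  shows "limsup (\<lambda>N. ereal (1 / real N * (\<Sum>n=1..N. w n))) = limsup (\<lambda>N. ereal (1 / real N * (\<Sum>n=1..N. z n)))"
proof -
  obtain n0 where n0: "\<And>n. n \<ge> n0 \<Longrightarrow> w n = z n"
    using assms by (auto simp: eventually_sequentially)
  define C where "C = (\<Sum>n=1..<n0. w n - z n)"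
  have "(\<Sum>n=1..N. w n) = C + (\<Sum>n=1..N. z n)" if "n0 \<le> N" for N
  proof -
    have "(\<Sum>n=1..N. w n - z n) = C"
      unfolding C_def using that n0 by (intro sum.mono_neutral_right) auto
    then show ?thesis by (simp add: sum_subtractf)
  qed
  then have "eventually (\<lambda>N. ereal (1 / real N * (\<Sum>n=1..N. w n)) =
      ereal (C / real N) + ereal (1 / real N * (\<Sum>n=1..N. z n))) sequentially"
    using eventually_ge_at_top[of n0] by (elim eventually_mono) (simp add: add_divide_distrib)
  then have "limsup (\<lambda>N. ereal (1 / real N * (\<Sum>n=1..N. w n))) =
      limsup (\<lambda>N. ereal (C / real N) + ereal (1 / real N * (\<Sum>n=1..N. z n)))"
    by (rule Limsup_eq)
  also have "\<dots> = ereal 0 + limsup (\<lambda>N. ereal (1 / real N * (\<Sum>n=1..N. z n)))"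
    by (intro ereal_limsup_lim_add) (simp_all add: lim_ereal lim_const_over_n)
  finally show ?thesis by (simp add: zero_ereal_def[symmetric])
qed

theorem limsup_average_le_of_measure_less:
  fixes X :: "nat \<Rightarrow> 'b \<Rightarrow> 'a::topological_space" and A :: "nat \<Rightarrow> 'b \<Rightarrow> 'a set"
  assumes "prob_space M" and "finite_measure \<nu>" and "sets \<nu> = sets borel"
    and X: "\<And>n. X n \<in> borel_measurable M" and "unif_dom_rate M X \<nu> \<epsilon>" and "0 < \<delta>"
    and A: "\<And>n. set_graph M (A n) \<in> sets (nat_past M X n \<Otimes>\<^sub>M borel)"
    and small: "\<And>n \<omega>. \<omega> \<in> space M \<Longrightarrow> measure \<nu> (A n \<omega>) < \<delta>"
  shows "AE \<omega> in M. limsup (\<lambda>N. ereal (1 / real N * (\<Sum>n=1..N. indicator (A n \<omega>) (X n \<omega>)))) \<le> ereal (\<epsilon> \<delta>)"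
proof (rule prob_space.limsup_average_le_of_cond_exp_le[OF assms(1)])
  have dominated: "cond_dominated M (nat_past M X n) \<nu> (X n) (\<epsilon> \<delta>) \<delta>" for n
    using assms(1-6) by (rule cond_dominated_nat_past)
  then show "0 \<le> \<epsilon> \<delta>" by (rule cond_dominated.bound_nonneg)
  show "AE \<omega> in M. real_cond_exp M (nat_past M X k) (\<lambda>\<omega>. indicator (A k \<omega>) (X k \<omega>)) \<omega> \<le> \<epsilon> \<delta>" for k
    using A small by (rule cond_dominated.AE_cond_exp_indicator_le[OF dominated])
  show "(\<lambda>\<omega>. indicator (A k \<omega>) (X k \<omega>) :: real) \<in> borel_measurable (nat_past M X (Suc k))" for k
    using A[of k] measurable_nat_past[of k "Suc k" X M] sets_nat_past_mono[of k "Suc k" M X]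
    by (intro measurable_indicator_set_graph[where F="nat_past M X k"]) (auto simp: subalgebra_def set_graph_nat_past)
qed (auto simp: subalgebra_nat_past[OF X] sets_nat_past_mono)

lemma eventually_truncate_eq:
  assumes "limsup (\<lambda>n. emeasure \<nu> (A n)) < t"
  shows "eventually (\<lambda>n. (if emeasure \<nu> (A n) < t then A n else {}) = A n) sequentially"
  using Limsup_lessD[OF assms] by (elim eventually_mono) simp

theorem lemma1:
  fixes M :: "'b measure" and \<nu> :: "'a::{metric_space, second_countable_topology} measure"
    and X :: "nat \<Rightarrow> 'b \<Rightarrow> 'a" and A :: "nat \<Rightarrow> 'b \<Rightarrow> 'a set"
    and \<epsilon> :: "real \<Rightarrow> real" and \<delta> :: real
  assumes "prob_space M"
    and "finite_measure \<nu>" and "sets \<nu> = sets borel"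
    and "\<And>n. X n \<in> borel_measurable M"
    and "unif_dom_rate M X \<nu> \<epsilon>"
    and "\<And>n. {(\<omega>, x). \<omega> \<in> space M \<and> x \<in> A n \<omega>} \<in> sets (nat_past M X n \<Otimes>\<^sub>M borel)"
    and "AE \<omega> in M. limsup (\<lambda>n. emeasure \<nu> (A n \<omega>)) < ennreal \<delta>"
  shows "AE \<omega> in M. limsup (\<lambda>N. ereal ((1 / real N) * (\<Sum>n=1..N. indicator (A n \<omega>) (X n \<omega>))))
            \<le> ereal (\<epsilon> \<delta>)"
proof -
  interpret prob_space M by fact
  define A' where "A' n \<omega> = (if emeasure \<nu> (A n \<omega>) < ennreal \<delta> then A n \<omega> else {})" for n \<omega>
  have "AE \<omega> in M. 0 < \<delta>"
    using assms(7) by eventually_elim (metis ennreal_less_zero_iff le_less_trans zero_le)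
  then have "0 < \<delta>" by simp
  have "set_graph (nat_past M X n) (A' n) \<in> sets (nat_past M X n \<Otimes>\<^sub>M borel)" for n
    unfolding A'_def using finite_measure.sigma_finite_measure[OF assms(2)] assms(3,6)
    by (intro set_graph_truncate_in_sets) (simp_all add: set_graph_def)
  moreover have "measure \<nu> (A' n \<omega>) < \<delta>" for n \<omega>
    using assms(2) \<open>0 < \<delta>\<close> by (auto simp: A'_def finite_measure.emeasure_eq_measure ennreal_less_iff)
  ultimately have "AE \<omega> in M. limsup (\<lambda>N. ereal (1 / real N * (\<Sum>n=1..N. indicator (A' n \<omega>) (X n \<omega>))))
      \<le> ereal (\<epsilon> \<delta>)"
    using assms(1-5) \<open>0 < \<delta>\<close> by (intro limsup_average_le_of_measure_less) (simp_all add: set_graph_def)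
  moreover have "AE \<omega> in M. eventually (\<lambda>n. A' n \<omega> = A n \<omega>) sequentially"
    using assms(7) unfolding A'_def by eventually_elim (rule eventually_truncate_eq)
  ultimately show ?thesis
    by eventually_elim (subst limsup_average_eventually_cong, auto elim: eventually_mono)
qed

end
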